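(* Let $\mathfrak L=\mathbb V\oplus\mathbb W$ be a color gLt-algebra admitting a quasi-multiplicative basis $\mathfrak B=\{e_i\}_{i\in I}$ of $\mathbb W\neq 0$, and let $\mu$ be the associated map defined in the context. Let $i\in I$, $j\in\overline I$ and $X\in\mathfrak I^{\,n-1}\,\dot\cup\,\overline{\mathfrak I}^{\,n-1}$. Then $i\in\mu(j,X)$ if and only if $\overline j\in\mu(\overline i,X)$.
   Context: Let $\mathbb F$ be a field, $\mathbb G$ an abelian group, $n\ge 2$, and $\epsilon:\mathbb G\times\mathbb G\to\mathbb F\setminus\{0\}$ a bicharacter ($\epsilon(k,g+h)=\epsilon(k,g)\epsilon(k,h)$, $\epsilon(g+h,k)=\epsilon(g,k)\epsilon(h,k)$, $\epsilon(g,h)\epsilon(h,g)=1$). A graded $n$-ary algebra is a $\mathbb G$-graded vector space $\mathfrak L=\bigoplus_{g\in\mathbb G}\mathfrak L_g$ with an $n$-linear map $\langle\cdot,\dots,\cdot\rangle:\mathfrak L^n\to\mathfrak L$ such that $\langle\mathfrak L_{g_1},\dots,\mathfrak L_{g_n}\rangle\subset\mathfrak L_{g_1+\dots+g_n}$. For $\sigma\in\mathbb S_n$ write $\langle x_1,\dots,x_n\rangle_\sigma:=\langle x_{\sigma(1)},\dots,x_{\sigma(n)}\rangle$; for subsets $A_1,\dots,A_n$, $\langle A_1,\dots,A_n\rangle_\sigma$ denotes the linear span of all $\langle x_1,\dots,x_n\rangle_\sigma$ with $x_r\in A_r$. A color gLt-algebra is a graded $n$-ary algebra satisfying, for each $k=1,\dots,n$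 and fixed scalars $\alpha^{\sigma_1,\sigma_2}_{i,j,k}\in\mathbb F$, the color version (each term on the right multiplied by the product of values of $\epsilon$ on the degrees of the homogeneous arguments transposed in passing from the left-hand order to the order of that term) of the identity $\langle y_1,\dots,y_{k-1},\langle x_1,\dots,x_n\rangle,y_k,\dots,y_{n-1}\rangle=\sum_{1\le i,j\le n,\,\sigma_1\in\mathbb S_n,\,\sigma_2\in\mathbb S_{n-1}}\alpha^{\sigma_1,\sigma_2}_{i,j,k}\langle x_{\sigma_1(1)},\dots,x_{\sigma_1(i-1)},\langle y_{\sigma_2(1)},\dots,y_{\sigma_2(j-1)},x_{\sigma_1(i)},y_{\sigma_2(j)},\dots,y_{\sigma_2(n-1)}\rangle,x_{\sigma_1(i+1)},\dots,x_{\sigma_1(n)}\rangle$. $\mathfrak L$ admits a quasi-multiplicative basis if $\mathfrak L=\mathbb V\oplus\mathbb W$ with $\mathbb V$, $\mathbb W\ne0$ graded subspaces and $\mathfrak B=\{e_i\}_{i\in I}$ a basis of homogeneous elements of $\mathbb W$ such that: (1) for $i_1,\dots,i_n\in I$, either $\langle e_{i_1},\dots,e_{i_n}\rangle\in\mathbb Fe_j$ for some $j\in I$ or $\langle e_{i_1},\dots,e_{i_n}\rangle\in\mathbb V$; (2) for $0<k<n$, $i_1,\dots,i_k\in I$ and $\sigma\in\mathbb S_n$, $\langle e_{i_1},\dots,e_{i_k},\mathbb V,\dots,\mathbb V\rangle_\sigma\subset\mathbb Fe_{j_\sigma}$ for some $j_\sigma\in I$; (3) either $\langle\mathbb V,\dots,\mathbb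 V\rangle\subset\mathbb Fe_j$ for some $j\in I$ or $\langle\mathbb V,\dots,\mathbb V\rangle\subset\mathbb V$. Index maps: let $v$ be a symbol not in $I$, $\mathfrak I:=I\,\dot\cup\,\{v\}$; for each $j\in\mathfrak I$ take a new symbol $\overline j$, $\overline I:=\{\overline i:i\in I\}$, $\overline{\mathfrak I}:=\overline I\,\dot\cup\,\{\overline v\}$; set $\overline{(\overline j)}:=j$, $\overline J:=\{\overline j:j\in J\}$ for a set $J$ of symbols, and $\overline X:=(\overline a_2,\dots,\overline a_n)$ for a tuple $X=(a_2,\dots,a_n)$. Put $u_j:=e_j$ for $j\in I$ and $u_v:=\mathbb V$. For $\sigma\in\mathbb S_n$ and $(j_1,\dots,j_n)\in\mathfrak I^n$ let $a_\sigma(j_1,\dots,j_n)=\{r\}$ if $r\in I$ and $0\ne\langle u_{j_1},\dots,u_{j_n}\rangle_\sigma\subset\mathbb Fe_r$, $=\{v\}$ if $0\ne\langle u_{j_1},\dots,u_{j_n}\rangle_\sigma\subset\mathbb V$, and $=\emptyset$ otherwise. For $j,j_2,\dots,j_n\in\mathfrak I$ let $b_\sigma(j,\overline j_2,\dots,\overline j_n):=\{x\in\mathfrak I: a_\sigma(x,j_2,\dots,j_n)=\{j\}\}$. Define $\mu$ on $(\mathfrak I\,\dot\cup\,\overline{\mathfrak I})\times(\mathfrak I^{n-1}\,\dot\cup\,\overline{\mathfrak I}^{n-1})$ with values subsets of $\mathfrak I$ by: $\mu(j,j_1,\dots,j_{n-1})=\bigcup_{\sigma\in\mathbb S_n}a_\sigma(j,j_1,\dots,j_{n-1})$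 for $j,j_1,\dots,j_{n-1}\in\mathfrak I$; $\mu(j,\overline j_1,\dots,\overline j_{n-1})=\bigcup_{\sigma\in\mathbb S_n}b_\sigma(j,\overline j_1,\dots,\overline j_{n-1})$ for $j,j_1,\dots,j_{n-1}\in\mathfrak I$; $\mu(\overline j,j_1,\dots,j_{n-1})=\bigcup_{1\le k\le n-1,\ \sigma\in\mathbb S_n}b_\sigma(j_k,\overline j,\overline j_1,\dots,\overline j_{k-1},\overline j_{k+1},\dots,\overline j_{n-1})$ for $j,j_1,\dots,j_{n-1}\in\mathfrak I$; and $\mu(\overline j,\overline j_1,\dots,\overline j_{n-1})=\emptyset$. *)

theory Defs
  imports Main "HOL.Vector_Spaces" "HOL-Combinatorics.Permutations"
begin

(* Conventions: the field is 'f, the grading group is 'g, the algebra is the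
   type 'v with scalar multiplication scale, forming a vector space over 'f.
   n-ary products are functions on lists ("mul xs" with length xs = n);
   all indices are 0-based. Permutations in S_m are the sigma with
   sigma permutes {..<m}. *)

definition bicharacter :: "('g::ab_group_add \<Rightarrow> 'g \<Rightarrow> 'f::field) \<Rightarrow> bool" where
  "bicharacter \<epsilon> \<longleftrightarrow>
     (\<forall>g h. \<epsilon> g h \<noteq> 0) \<and>
     (\<forall>k g h. \<epsilon> k (g + h) = \<epsilon> k g * \<epsilon> k h) \<and>
     (\<forall>k g h. \<epsilon> (g + h) k = \<epsilon> g k * \<epsilon> h k) \<and>
     (\<forall>g h. \<epsilon> g h * \<epsilon> h g = 1)"

definition graded_space ::
  "('f::field \<Rightarrow> 'v::ab_group_add \<Rightarrow> 'v) \<Rightarrow> ('g \<Rightarrow> 'v set) \<Rightarrow> bool" where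
  "graded_space scale L \<longleftrightarrow>
     vector_space scale \<and>
     (\<forall>g. module.subspace scale (L g)) \<and>
     module.span scale (\<Union>g. L g) = UNIV \<and>
     (\<forall>G f. finite G \<longrightarrow> (\<forall>g\<in>G. f g \<in> L g) \<longrightarrow> (\<Sum>g\<in>G. f g) = 0 \<longrightarrow> (\<forall>g\<in>G. f g = 0))"

definition graded_subspace ::
  "('f::field \<Rightarrow> 'v::ab_group_add \<Rightarrow> 'v) \<Rightarrow> ('g \<Rightarrow> 'v set) \<Rightarrow> 'v set \<Rightarrow> bool" where
  "graded_subspace scale L S \<longleftrightarrow>
     module.subspace scale S \<and> S = module.span scale (\<Union>g. S \<inter> L g)"

definition graded_nary_algebra ::
  "('f::field \<Rightarrow> 'v::ab_group_add \<Rightarrow> 'v) \<Rightarrow> ('g::ab_group_add \<Rightarrow> 'v set) \<Rightarrow> nat \<Rightarrow> ('v list \<Rightarrow> 'v) \<Rightarrow> bool" where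
  "graded_nary_algebra scale L n mul \<longleftrightarrow>
     graded_space scale L \<and>
     (\<forall>xs r a b c. length xs = n \<longrightarrow> r < n \<longrightarrow>
        mul (xs[r := scale c a + b]) = scale c (mul (xs[r := a])) + mul (xs[r := b])) \<and>
     (\<forall>xs gs. length xs = n \<longrightarrow> length gs = n \<longrightarrow> (\<forall>r<n. xs ! r \<in> L (gs ! r)) \<longrightarrow>
        mul xs \<in> L (sum_list gs))"

text \<open>Labels of the 2n-1 homogeneous arguments: Inl r is x_r, Inr s is y_s.
  Order of the labels in the right-hand term indexed by (i, j, sigma1, sigma2) (0-based).\<close>
definition rhs_labels :: "nat \<Rightarrow> nat \<Rightarrow> nat \<Rightarrow> (nat \<Rightarrow> nat) \<Rightarrow> (nat \<Rightarrow> nat) \<Rightarrow> (nat + nat) list" where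
  "rhs_labels n i j \<sigma>1 \<sigma>2 =
     map (Inl \<circ> \<sigma>1) [0..<i] @ map (Inr \<circ> \<sigma>2) [0..<j] @ [Inl (\<sigma>1 i)] @
     map (Inr \<circ> \<sigma>2) [j..<n - 1] @ map (Inl \<circ> \<sigma>1) [Suc i..<n]"

text \<open>Position of a label in the left-hand order y_0..y_(k-1), x_0..x_(n-1), y_k..y_(n-2).\<close>
definition lhs_pos :: "nat \<Rightarrow> nat \<Rightarrow> nat + nat \<Rightarrow> nat" where
  "lhs_pos n k l = (case l of Inl r \<Rightarrow> k + r | Inr s \<Rightarrow> (if s < k then s else s + n))"

definition label_deg :: "'g list \<Rightarrow> 'g list \<Rightarrow> nat + nat \<Rightarrow> 'g" where
  "label_deg gs hs l = (case l of Inl r \<Rightarrow> gs ! r | Inr s \<Rightarrow> hs ! s)"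

text \<open>Colour factor: product over all pairs of arguments transposed between the left-hand
  order and the order of the term, of epsilon(degree of the one earlier on the left,
  degree of the one later on the left).\<close>
definition color_factor ::
  "('g \<Rightarrow> 'g \<Rightarrow> 'f::field) \<Rightarrow> nat \<Rightarrow> nat \<Rightarrow> nat \<Rightarrow> nat \<Rightarrow> (nat \<Rightarrow> nat) \<Rightarrow> (nat \<Rightarrow> nat)
     \<Rightarrow> 'g list \<Rightarrow> 'g list \<Rightarrow> 'f" where
  "color_factor \<epsilon> n k i j \<sigma>1 \<sigma>2 gs hs =
     (let RL = rhs_labels n i j \<sigma>1 \<sigma>2 in
      \<Prod>(p, q) \<in> {(p, q). p < q \<and> q < length RL \<and> lhs_pos n k (RL ! q) < lhs_pos n k (RL ! p)}.
        \<epsilon> (label_deg gs hs (RL ! q)) (label_deg gs hs (RL ! p)))"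

definition rhs_term ::
  "('v list \<Rightarrow> 'v) \<Rightarrow> nat \<Rightarrow> nat \<Rightarrow> nat \<Rightarrow> (nat \<Rightarrow> nat) \<Rightarrow> (nat \<Rightarrow> nat) \<Rightarrow> 'v list \<Rightarrow> 'v list \<Rightarrow> 'v" where
  "rhs_term mul n i j \<sigma>1 \<sigma>2 xs ys =
     mul (map (\<lambda>r. xs ! \<sigma>1 r) [0..<i] @
           [mul (map (\<lambda>s. ys ! \<sigma>2 s) [0..<j] @ [xs ! \<sigma>1 i] @ map (\<lambda>s. ys ! \<sigma>2 s) [j..<n - 1])] @
           map (\<lambda>r. xs ! \<sigma>1 r) [Suc i..<n])"

definition color_gLt_algebra ::
  "('f::field \<Rightarrow> 'v::ab_group_add \<Rightarrow> 'v) \<Rightarrow> ('g::ab_group_add \<Rightarrow> 'v set) \<Rightarrow> nat \<Rightarrow> ('v list \<Rightarrow> 'v)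
     \<Rightarrow> ('g \<Rightarrow> 'g \<Rightarrow> 'f) \<Rightarrow> (nat \<Rightarrow> nat \<Rightarrow> nat \<Rightarrow> (nat \<Rightarrow> nat) \<Rightarrow> (nat \<Rightarrow> nat) \<Rightarrow> 'f) \<Rightarrow> bool" where
  "color_gLt_algebra scale L n mul \<epsilon> \<alpha> \<longleftrightarrow>
     2 \<le> n \<and> bicharacter \<epsilon> \<and> graded_nary_algebra scale L n mul \<and>
     (\<forall>k<n. \<forall>xs ys gs hs.
        length xs = n \<longrightarrow> length gs = n \<longrightarrow> length ys = n - 1 \<longrightarrow> length hs = n - 1 \<longrightarrow>
        (\<forall>r<n. xs ! r \<in> L (gs ! r)) \<longrightarrow> (\<forall>s<n - 1. ys ! s \<in> L (hs ! s)) \<longrightarrow>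
        mul (take k ys @ [mul xs] @ drop k ys) =
          (\<Sum>i<n. \<Sum>j<n. \<Sum>\<sigma>1 \<in> {\<sigma>. \<sigma> permutes {..<n}}. \<Sum>\<sigma>2 \<in> {\<sigma>. \<sigma> permutes {..<n - 1}}.
             scale (\<alpha> i j k \<sigma>1 \<sigma>2 * color_factor \<epsilon> n k i j \<sigma>1 \<sigma>2 gs hs)
               (rhs_term mul n i j \<sigma>1 \<sigma>2 xs ys)))"

definition set_prod ::
  "('f::field \<Rightarrow> 'v::ab_group_add \<Rightarrow> 'v) \<Rightarrow> nat \<Rightarrow> ('v list \<Rightarrow> 'v) \<Rightarrow> (nat \<Rightarrow> nat) \<Rightarrow> 'v set list \<Rightarrow> 'v set" where
  "set_prod scale n mul \<sigma> As =
     module.span scale {mul (map (\<lambda>r. xs ! \<sigma> r) [0..<n]) | xs.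
        length xs = n \<and> (\<forall>r<n. xs ! r \<in> As ! r)}"

definition fline :: "('f::field \<Rightarrow> 'v::ab_group_add \<Rightarrow> 'v) \<Rightarrow> 'v \<Rightarrow> 'v set" where
  "fline scale x = range (\<lambda>c. scale c x)"

definition quasi_multiplicative_basis ::
  "('f::field \<Rightarrow> 'v::ab_group_add \<Rightarrow> 'v) \<Rightarrow> ('g::ab_group_add \<Rightarrow> 'v set) \<Rightarrow> nat \<Rightarrow> ('v list \<Rightarrow> 'v)
     \<Rightarrow> 'v set \<Rightarrow> 'v set \<Rightarrow> 'i set \<Rightarrow> ('i \<Rightarrow> 'v) \<Rightarrow> bool" where
  "quasi_multiplicative_basis scale L n mul V W I e \<longleftrightarrow>
     graded_subspace scale L V \<and> graded_subspace scale L W \<and>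
     V \<noteq> {0} \<and> W \<noteq> {0} \<and> V \<inter> W = {0} \<and> {v + w | v w. v \<in> V \<and> w \<in> W} = UNIV \<and>
     inj_on e I \<and> \<not> module.dependent scale (e ` I) \<and> module.span scale (e ` I) = W \<and>
     (\<forall>i\<in>I. \<exists>g. e i \<in> L g) \<and>
     (\<forall>ks. length ks = n \<longrightarrow> set ks \<subseteq> I \<longrightarrow>
        (\<exists>j\<in>I. mul (map e ks) \<in> fline scale (e j)) \<or> mul (map e ks) \<in> V) \<and>
     (\<forall>k ks \<sigma>. 0 < k \<longrightarrow> k < n \<longrightarrow> length ks = k \<longrightarrow> set ks \<subseteq> I \<longrightarrow> \<sigma> permutes {..<n} \<longrightarrow>
        (\<exists>j\<in>I. set_prod scale n mul \<sigma> (map (\<lambda>i. {e i}) ks @ replicate (n - k) V)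
                  \<subseteq> fline scale (e j))) \<and>
     ((\<exists>j\<in>I. set_prod scale n mul id (replicate n V) \<subseteq> fline scale (e j)) \<or>
      set_prod scale n mul id (replicate n V) \<subseteq> V)"

text \<open>Symbols: Idx i for i in I, and Vs for the extra symbol v. Barred symbols: Bar.\<close>
datatype 'i symb = Idx 'i | Vs
datatype 'i bsym = Plain "'i symb" | Bar "'i symb"

definition frakI :: "'i set \<Rightarrow> 'i symb set" where
  "frakI I = Idx ` I \<union> {Vs}"

definition u_set :: "'v set \<Rightarrow> ('i \<Rightarrow> 'v) \<Rightarrow> 'i symb \<Rightarrow> 'v set" where
  "u_set V e j = (case j of Idx i \<Rightarrow> {e i} | Vs \<Rightarrow> V)"

definition a_map ::
  "('f::field \<Rightarrow> 'v::ab_group_add \<Rightarrow> 'v) \<Rightarrow> nat \<Rightarrow> ('v list \<Rightarrow> 'v) \<Rightarrow> 'v set \<Rightarrow> 'i set \<Rightarrow> ('i \<Rightarrow> 'v)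
     \<Rightarrow> (nat \<Rightarrow> nat) \<Rightarrow> 'i symb list \<Rightarrow> 'i symb set" where
  "a_map scale n mul V I e \<sigma> js =
     (let P = set_prod scale n mul \<sigma> (map (u_set V e) js) in
       {Idx r | r. r \<in> I \<and> P \<noteq> {0} \<and> P \<subseteq> fline scale (e r)} \<union>
       {Vs | _::unit. P \<noteq> {0} \<and> P \<subseteq> V})"

text \<open>b_sigma(j, bar j_2, ..., bar j_n), with js = [j_2, ..., j_n].\<close>
definition b_map ::
  "('f::field \<Rightarrow> 'v::ab_group_add \<Rightarrow> 'v) \<Rightarrow> nat \<Rightarrow> ('v list \<Rightarrow> 'v) \<Rightarrow> 'v set \<Rightarrow> 'i set \<Rightarrow> ('i \<Rightarrow> 'v)
     \<Rightarrow> (nat \<Rightarrow> nat) \<Rightarrow> 'i symb \<Rightarrow> 'i symb list \<Rightarrow> 'i symb set" where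
  "b_map scale n mul V I e \<sigma> j js = {x \<in> frakI I. a_map scale n mul V I e \<sigma> (x # js) = {j}}"

text \<open>The map mu. Tuples in frakI^(n-1) are Inl js, tuples in bar-frakI^(n-1) are Inr js
  (js the list of underlying unbarred symbols).\<close>
fun mu ::
  "('f::field \<Rightarrow> 'v::ab_group_add \<Rightarrow> 'v) \<Rightarrow> nat \<Rightarrow> ('v list \<Rightarrow> 'v) \<Rightarrow> 'v set \<Rightarrow> 'i set \<Rightarrow> ('i \<Rightarrow> 'v)
     \<Rightarrow> 'i bsym \<Rightarrow> ('i symb list + 'i symb list) \<Rightarrow> 'i symb set" where
  "mu scale n mul V I e (Plain j) (Inl js) =
     (\<Union>\<sigma>\<in>{\<sigma>. \<sigma> permutes {..<n}}. a_map scale n mul V I e \<sigma> (j # js))"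
| "mu scale n mul V I e (Plain j) (Inr js) =
     (\<Union>\<sigma>\<in>{\<sigma>. \<sigma> permutes {..<n}}. b_map scale n mul V I e \<sigma> j js)"
| "mu scale n mul V I e (Bar j) (Inl js) =
     (\<Union>k<n - 1. \<Union>\<sigma>\<in>{\<sigma>. \<sigma> permutes {..<n}}.
        b_map scale n mul V I e \<sigma> (js ! k) (j # take k js @ drop (Suc k) js))"
| "mu scale n mul V I e (Bar j) (Inr js) = {}"

definition tuples :: "nat \<Rightarrow> 'i set \<Rightarrow> ('i symb list + 'i symb list) set" where
  "tuples n I = Inl ` {js. length js = n - 1 \<and> set js \<subseteq> frakI I} \<union>
                Inr ` {js. length js = n - 1 \<and> set js \<subseteq> frakI I}"

end

theory Submission
  imports Defs
begin

text \<open>Exchanging the first two argument slots of the products in \<open>a_\<sigma>\<close> amounts to composing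
  \<open>\<sigma>\<close> with the transposition \<open>(0 1)\<close>, so \<open>a_\<sigma>(i, j, Y) = {x}\<close> for some \<open>\<sigma>\<close> iff
  \<open>a_\<tau>(j, i, Y) = {x}\<close> for some \<open>\<tau>\<close>. Unfolding \<open>\<mu>\<close> on a barred first argument through
  \<open>b_\<sigma>\<close>, both sides of the equivalence become exactly these two conditions (and both are empty
  on barred tuples). No property of the algebra or of the basis is needed.\<close>

lemma nth_Cons_Cons_transpose: "(b # a # R) ! r = (a # b # R) ! transpose 0 1 r"
  by (cases r; cases "r - 1") (auto simp: transpose_def)

lemma transpose_0_1_less: "2 \<le> n \<Longrightarrow> r < n \<Longrightarrow> transpose 0 1 r < (n::nat)"
  by (simp add: transpose_def)

lemma set_prod_generators_swap_subset:
  fixes mul :: "'v list \<Rightarrow> 'v"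
  assumes n: "2 \<le> n" and \<sigma>: "\<And>r. r < n \<Longrightarrow> \<sigma> r < n"
  shows "{mul (map (\<lambda>r. xs ! \<sigma> r) [0..<n]) | xs.
            length xs = n \<and> (\<forall>r<n. xs ! r \<in> (a # b # R) ! r)}
       \<subseteq> {mul (map (\<lambda>r. xs ! (transpose 0 1 \<circ> \<sigma>) r) [0..<n]) | xs.
            length xs = n \<and> (\<forall>r<n. xs ! r \<in> (b # a # R) ! r)}"
proof
  fix z assume "z \<in> {mul (map (\<lambda>r. xs ! \<sigma> r) [0..<n]) | xs.
                         length xs = n \<and> (\<forall>r<n. xs ! r \<in> (a # b # R) ! r)}"
  then obtain xs where z: "z = mul (map (\<lambda>r. xs ! \<sigma> r) [0..<n])"
    and mem: "\<forall>r<n. xs ! r \<in> (a # b # R) ! r"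
    by blast
  define ys where "ys = map (\<lambda>r. xs ! transpose 0 1 r) [0..<n]"
  have ys_mem: "\<forall>r<n. ys ! r \<in> (b # a # R) ! r"
    unfolding nth_Cons_Cons_transpose[of b a] using mem transpose_0_1_less[OF n]
    by (simp add: ys_def)
  have ys_args: "map (\<lambda>r. xs ! \<sigma> r) [0..<n] = map (\<lambda>r. ys ! (transpose 0 1 \<circ> \<sigma>) r) [0..<n]"
    using \<sigma> transpose_0_1_less[OF n] by (simp add: ys_def)
  have ys_len: "length ys = n"
    by (simp add: ys_def)
  show "z \<in> {mul (map (\<lambda>r. xs ! (transpose 0 1 \<circ> \<sigma>) r) [0..<n]) | xs.
                         length xs = n \<and> (\<forall>r<n. xs ! r \<in> (b # a # R) ! r)}"
    unfolding z ys_args by (intro CollectI exI[of _ ys] conjI refl ys_len ys_mem)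
qed

lemma set_prod_swap_first_two:
  assumes n: "2 \<le> n" and \<sigma>: "\<sigma> permutes {..<n}"
  shows "set_prod scale n mul \<sigma> (a # b # R)
       = set_prod scale n mul (transpose 0 1 \<circ> \<sigma>) (b # a # R)"
proof -
  have \<sigma>_less: "\<And>r. r < n \<Longrightarrow> \<sigma> r < n"
    using \<sigma> by (meson lessThan_iff permutes_in_image)
  then have \<tau>_less: "\<And>r. r < n \<Longrightarrow> (transpose 0 1 \<circ> \<sigma>) r < n"
    using transpose_0_1_less[OF n] by simp
  have "transpose 0 1 \<circ> (transpose 0 1 \<circ> \<sigma>) = \<sigma>"
    by (simp add: fun_eq_iff)
  then show ?thesis
    unfolding set_prod_def
    using set_prod_generators_swap_subset[OF n \<sigma>_less, where mul=mul and a=a and b=b and R=R]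
          set_prod_generators_swap_subset[OF n \<tau>_less, where mul=mul and a=b and b=a and R=R]
    by (intro arg_cong[where f="module.span scale"] equalityI) simp_all
qed

lemma a_map_swap_first_two:
  assumes "2 \<le> n" and "\<sigma> permutes {..<n}"
  shows "a_map scale n mul V I e \<sigma> (x # y # R)
       = a_map scale n mul V I e (transpose 0 1 \<circ> \<sigma>) (y # x # R)"
  unfolding a_map_def
  using set_prod_swap_first_two[OF assms, where scale=scale and mul=mul and a="u_set V e x"
          and b="u_set V e y" and R="map (u_set V e) R"]
  by simp

lemma ex_a_map_singleton_swap_first_two:
  assumes n: "2 \<le> n"
    and "\<sigma> permutes {..<n}" and "a_map scale n mul V I e \<sigma> (x # y # R) = {c}"
  shows "\<exists>\<tau>. \<tau> permutes {..<n} \<and> a_map scale n mul V I e \<tau> (y # x # R) = {c}"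
proof (intro exI conjI)
  show "transpose 0 1 \<circ> \<sigma> permutes {..<n}"
    using assms(2) n by (intro permutes_compose permutes_swap_id) auto
  show "a_map scale n mul V I e (transpose 0 1 \<circ> \<sigma>) (y # x # R) = {c}"
    using assms(3) a_map_swap_first_two[OF n assms(2), where scale=scale and mul=mul
            and V=V and I=I and e=e and x=x and y=y and R=R]
    by simp
qed

lemma mem_mu_Bar_Inl_iff:
  assumes "x \<in> frakI I"
  shows "x \<in> mu scale n mul V I e (Bar j) (Inl js) \<longleftrightarrow>
    (\<exists>k<n - 1. \<exists>\<sigma>. \<sigma> permutes {..<n} \<and>
       a_map scale n mul V I e \<sigma> (x # j # take k js @ drop (Suc k) js) = {js ! k})"
  using assms by (auto simp: b_map_def)

theorem lemma3p2:
  fixes scale :: "'f::field \<Rightarrow> 'v::ab_group_add \<Rightarrow> 'v"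
    and L :: "'g::ab_group_add \<Rightarrow> 'v set"
    and n :: nat
    and mul :: "'v list \<Rightarrow> 'v"
    and \<epsilon> :: "'g \<Rightarrow> 'g \<Rightarrow> 'f"
    and \<alpha> :: "nat \<Rightarrow> nat \<Rightarrow> nat \<Rightarrow> (nat \<Rightarrow> nat) \<Rightarrow> (nat \<Rightarrow> nat) \<Rightarrow> 'f"
    and V W :: "'v set"
    and I :: "'i set"
    and e :: "'i \<Rightarrow> 'v"
    and i j :: 'i
    and X :: "'i symb list + 'i symb list"
  assumes "n \<ge> 2"
    and "color_gLt_algebra scale L n mul \<epsilon> \<alpha>"
    and "quasi_multiplicative_basis scale L n mul V W I e"
    and "i \<in> I" and "j \<in> I"
    and "X \<in> tuples n I"
  shows "Idx i \<in> mu scale n mul V I e (Bar (Idx j)) X \<longleftrightarrow>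
         Idx j \<in> mu scale n mul V I e (Bar (Idx i)) X"
proof (cases X)
  case (Inr js)
  then show ?thesis by simp
next
  case (Inl js)
  have "Idx i \<in> frakI I" "Idx j \<in> frakI I"
    using \<open>i \<in> I\<close> \<open>j \<in> I\<close> by (auto simp: frakI_def)
  then show ?thesis
    unfolding Inl mem_mu_Bar_Inl_iff[OF \<open>Idx i \<in> frakI I\<close>] mem_mu_Bar_Inl_iff[OF \<open>Idx j \<in> frakI I\<close>]
    using ex_a_map_singleton_swap_first_two[OF \<open>n \<ge> 2\<close>] by meson
qed

end
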